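(* Let $S(t,z)=\sum_\pi t^{|\pi|}z^{\mathrm{rmax}(\pi)}$ over all separable permutations, which equals (with $r=\sqrt{t^2-6t+1}$) $$S(t,z)=\frac{4\sqrt{\left(-\frac{1}{4}r-tz+\frac{t}{4}+\frac{5}{4}\right)^2+r-t-1}-r+4tz+t-3}{2(r-t-1)}.$$ Define $$E(t,z_1,z_2,z_3)=z_1z_2z_3t+\frac{(S(t,z_1)+1)(S(t,z_2)+1)(S(t,z_3)+1)\,t^2z_1^2z_2z_3}{(1-S(t,z_1)S(t,z_3))(1-S(t,z_1)S(t,z_2))},$$ $$A(z_2,z_3)=S(t,z_2)\left(z_3t+\frac{S(t,z_3)^2}{S(t,z_3)+1}\right),\qquad D=1-A(z_2,z_3)-tz_2z_3,$$ and $E=E(t,z_1,z_2,z_3)$. For an ordered triple $T=(\mathrm{stat}_1,\mathrm{stat}_2,\mathrm{stat}_3)$ write $G_T=\sum_\pi t^{|\pi|}z_1^{\mathrm{stat}_1(\pi)}z_2^{\mathrm{stat}_2(\pi)}z_3^{\mathrm{stat}_3(\pi)}$. Then: (i) for every $T\in\{(\mathrm{lmax},\mathrm{rmax},\mathrm{lmin}),(\mathrm{lmin},\mathrm{rmin},\mathrm{lmax}),(\mathrm{rmin},\mathrm{rmax},\mathrm{lmin}),(\mathrm{rmax},\mathrm{rmin},\mathrm{lmax})\}$, $G_T$ over all separable permutations equals $E/D$; (ii) for $T\in\{(\mathrm{lmax},\mathrm{rmax},\mathrm{lmin}),(\mathrm{rmin},\mathrm{rmax},\mathrm{lmin})\}$,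 $G_T$ over reducible separable permutations equals $E-z_1z_2z_3t$, and over irreducible separable permutations equals $$\frac{1}{D}\Bigl(z_1z_2z_3t+\bigl(A(z_2,z_3)+tz_2z_3\bigr)\bigl(E-z_1z_2z_3t\bigr)\Bigr);$$ (iii) for $T\in\{(\mathrm{lmin},\mathrm{rmin},\mathrm{lmax}),(\mathrm{rmax},\mathrm{rmin},\mathrm{lmax})\}$, $G_T$ over irreducible separable permutations equals $E$, and over reducible separable permutations equals $$-z_1z_2z_3t+\frac{1}{D}\Bigl(z_1z_2z_3t+\bigl(A(z_2,z_3)+tz_2z_3\bigr)\bigl(E-z_1z_2z_3t\bigr)\Bigr).$$
   Context: A permutation of length $n$ is a word $\pi=\pi_1\cdots\pi_n$ containing each element of $[n]$ exactly once; $|\pi|=n$. For $\pi$ of length $m$, $\sigma$ of length $n$: $\pi\oplus\sigma=\pi_1\cdots\pi_m(\sigma_1+m)\cdots(\sigma_n+m)$, $\pi\ominus\sigma=(\pi_1+n)\cdots(\pi_m+n)\sigma_1\cdots\sigma_n$. Separable permutations are those of length $\ge1$ obtained from $1$ by repeatedly applying $\oplus,\ominus$ (equivalently, avoiding $2413$ and $3142$). The permutation $1$ is irreducible; a permutation of length $n\ge2$ is irreducible if there is no $i$, $2\le i\le n$, such that every element of $\pi_1\cdots\pi_{i-1}$ is less than every element of $\pi_i\cdots\pi_n$; reducible means not irreducible (length $\ge2$). $\pi_i$ is a left-to-right maximum (minimum) if $\pi_i>\pi_j$ ($\pi_i<\pi_j$) for all $j<i$, a right-to-left maximum (minimum) if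 $\pi_i>\pi_j$ ($\pi_i<\pi_j$) for all $j>i$; $\mathrm{lmax},\mathrm{lmin},\mathrm{rmax},\mathrm{rmin}$ count these. Square roots are the branches giving formal power series in $t$. *)

theory Defs
  imports Complex_Main "HOL-Computational_Algebra.Formal_Power_Series"
begin

(* Permutations are lists of naturals; a permutation of length n is a list
   containing each of 1..n exactly once.  Positions are 0-indexed in lists. *)

definition psum :: "nat list \<Rightarrow> nat list \<Rightarrow> nat list" where
  "psum p q = p @ map (\<lambda>x. x + length p) q"

definition pskew :: "nat list \<Rightarrow> nat list \<Rightarrow> nat list" where
  "pskew p q = map (\<lambda>x. x + length q) p @ q"

inductive separable :: "nat list \<Rightarrow> bool" where
  one: "separable [1]"
| plus: "separable p \<Longrightarrow> separable q \<Longrightarrow> separable (psum p q)"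
| minus: "separable p \<Longrightarrow> separable q \<Longrightarrow> separable (pskew p q)"

definition irreducible_perm :: "nat list \<Rightarrow> bool" where
  "irreducible_perm p \<longleftrightarrow> p = [1] \<or>
     (length p \<ge> 2 \<and> \<not> (\<exists>i\<in>{2..length p}.
        \<forall>a\<in>set (take (i - 1) p). \<forall>b\<in>set (drop (i - 1) p). a < b))"

definition reducible_perm :: "nat list \<Rightarrow> bool" where
  "reducible_perm p \<longleftrightarrow> length p \<ge> 2 \<and> \<not> irreducible_perm p"

definition lmax :: "nat list \<Rightarrow> nat" where
  "lmax p = card {i. i < length p \<and> (\<forall>j<i. p ! i > p ! j)}"
definition lmin :: "nat list \<Rightarrow> nat" where
  "lmin p = card {i. i < length p \<and> (\<forall>j<i. p ! i < p ! j)}"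
definition rmax :: "nat list \<Rightarrow> nat" where
  "rmax p = card {i. i < length p \<and> (\<forall>j. i < j \<and> j < length p \<longrightarrow> p ! i > p ! j)}"
definition rmin :: "nat list \<Rightarrow> nat" where
  "rmin p = card {i. i < length p \<and> (\<forall>j. i < j \<and> j < length p \<longrightarrow> p ! i < p ! j)}"

(* trivariate generating function over the permutations satisfying P,
   as a formal power series in t with the z_i specialised to complex numbers *)
definition GF :: "(nat list \<Rightarrow> bool) \<Rightarrow> (nat list \<Rightarrow> nat) \<times> (nat list \<Rightarrow> nat) \<times> (nat list \<Rightarrow> nat)
    \<Rightarrow> complex \<Rightarrow> complex \<Rightarrow> complex \<Rightarrow> complex fps" where
  "GF P T z1 z2 z3 = (case T of (s1, s2, s3) \<Rightarrow>
     Abs_fps (\<lambda>n. \<Sum>p\<in>{p. P p \<and> length p = n}. z1 ^ s1 p * z2 ^ s2 p * z3 ^ s3 p))"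

definition Sgf :: "complex \<Rightarrow> complex fps" where
  "Sgf z = Abs_fps (\<lambda>n. \<Sum>p\<in>{p. separable p \<and> length p = n}. z ^ rmax p)"

(* formal square root: the branch with constant term csqrt (a$0) (here always 1) *)
definition fsqrt :: "complex fps \<Rightarrow> complex fps" where
  "fsqrt a = fps_radical (\<lambda>_ x. csqrt x) 2 a"

definition Sclosed :: "complex \<Rightarrow> complex fps" where
  "Sclosed z = (let t = fps_X; r = fsqrt (t^2 - 6 * t + 1) in
     (4 * fsqrt ((- r / 4 - t * fps_const z + t / 4 + 5 / 4)^2 + r - t - 1)
        - r + 4 * t * fps_const z + t - 3) / (2 * (r - t - 1)))"

definition Egf :: "complex \<Rightarrow> complex \<Rightarrow> complex \<Rightarrow> complex fps" where
  "Egf z1 z2 z3 = (let t = fps_X in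
     fps_const (z1 * z2 * z3) * t +
     (Sgf z1 + 1) * (Sgf z2 + 1) * (Sgf z3 + 1) * t^2 * fps_const (z1^2 * z2 * z3)
       / ((1 - Sgf z1 * Sgf z3) * (1 - Sgf z1 * Sgf z2)))"

definition Agf :: "complex \<Rightarrow> complex \<Rightarrow> complex fps" where
  "Agf z2 z3 = Sgf z2 * (fps_const z3 * fps_X + (Sgf z3)^2 / (Sgf z3 + 1))"

definition Dgf :: "complex \<Rightarrow> complex \<Rightarrow> complex fps" where
  "Dgf z2 z3 = 1 - Agf z2 z3 - fps_X * fps_const (z2 * z3)"

end

theory Submission
  imports Defs
begin

(* Every separable permutation of length at least 2 is uniquely a \<oplus> b with a not
   \<oplus>-decomposable, or a \<ominus> b with a not \<ominus>-decomposable.  Under \<oplus> the left-to-right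
   maxima and the right-to-left minima of the blocks add up, while rmax is inherited from b
   and lmin from a; hence the series with weight x1^lmax x2^rmax x3^lmin x4^rmin satisfy a
   closed system of product equations.  Complementation p \<mapsto> n+1-p exchanges \<oplus> and \<ominus>
   as well as (lmax, rmax) and (lmin, rmin): it yields the equations for \<ominus> and pairs the
   triples (lmax, rmax, lmin), (lmin, rmin, lmax) and (rmin, rmax, lmin), (rmax, rmin, lmax).
   Setting all but one variable to 1 gives a quadratic equation for S(t, z), whose power
   series root is the stated radical; the remaining equations are linear in the trivariate
   series and solve to E/D and its variants. *)

unbundle fps_syntax

lemma less_add_cases:
  assumes "(k::nat) < m + n"
  obtains "k < m" | j where "j < n" "k = m + j"
  using assms by (metis add_diff_inverse_nat add_less_cancel_left)

lemma card_less_add_split: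
  "card {i. i < (m::nat) + n \<and> P i} = card {i. i < m \<and> P i} + card {j. j < n \<and> P (m + j)}"
proof -
  have "{i. i < m + n \<and> P i} = {i. i < m \<and> P i} \<union> (\<lambda>j. m + j) ` {j. j < n \<and> P (m + j)}"
    by (auto elim: less_add_cases)
  also have "card \<dots> = card {i. i < m \<and> P i} + card ((\<lambda>j. m + j) ` {j. j < n \<and> P (m + j)})"
    by (rule card_Un_disjoint) auto
  also have "card ((\<lambda>j. m + j) ` {j. j < n \<and> P (m + j)}) = card {j. j < n \<and> P (m + j)}"
    by (simp add: card_image)
  finally show ?thesis .
qed

lemma all_less_add_iff: "(\<forall>k < (m::nat) + n. P k) \<longleftrightarrow> (\<forall>k<m. P k) \<and> (\<forall>k<n. P (m + k))"
  by (auto elim: less_add_cases)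

lemma all_between_add_iff:
  "(\<forall>k. (m::nat) + i < k \<and> k < m + n \<longrightarrow> P k) \<longleftrightarrow> (\<forall>k. i < k \<and> k < n \<longrightarrow> P (m + k))"
  by (auto elim: less_add_cases)

lemma all_between_split_iff:
  assumes "(i::nat) < m"
  shows "(\<forall>j. i < j \<and> j < m + n \<longrightarrow> P j) \<longleftrightarrow> (\<forall>j. i < j \<and> j < m \<longrightarrow> P j) \<and> (\<forall>k<n. P (m + k))"
  using assms by (auto elim: less_add_cases)

definition left_records :: "('a \<Rightarrow> 'a \<Rightarrow> bool) \<Rightarrow> 'a list \<Rightarrow> nat" where
  "left_records R xs = card {i. i < length xs \<and> (\<forall>j<i. R (xs ! i) (xs ! j))}"

definition right_records :: "('a \<Rightarrow> 'a \<Rightarrow> bool) \<Rightarrow> 'a list \<Rightarrow> nat" where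
  "right_records R xs = card {i. i < length xs \<and> (\<forall>j. i < j \<and> j < length xs \<longrightarrow> R (xs ! i) (xs ! j))}"

lemma lmax_eq_left_records: "lmax p = left_records (>) p"
  and lmin_eq_left_records: "lmin p = left_records (<) p"
  and rmax_eq_right_records: "rmax p = right_records (>) p"
  and rmin_eq_right_records: "rmin p = right_records (<) p"
  by (simp_all add: lmax_def lmin_def rmax_def rmin_def left_records_def right_records_def)

lemma left_records_append:
  "left_records R (xs @ ys) = left_records R xs
     + card {j. j < length ys \<and> (\<forall>x\<in>set xs. R (ys ! j) x) \<and> (\<forall>k<j. R (ys ! j) (ys ! k))}"
proof -
  let ?zs = "xs @ ys"
  have split: "left_records R ?zs = card {i. i < length xs \<and> (\<forall>j<i. R (?zs ! i) (?zs ! j))}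
      + card {j. j < length ys \<and> (\<forall>k < length xs + j. R (?zs ! (length xs + j)) (?zs ! k))}"
    unfolding left_records_def length_append by (rule card_less_add_split)
  have prefix: "{i. i < length xs \<and> (\<forall>j<i. R (?zs ! i) (?zs ! j))}
      = {i. i < length xs \<and> (\<forall>j<i. R (xs ! i) (xs ! j))}"
    by (auto simp: nth_append)
  have suffix: "(\<forall>k < length xs + j. R (?zs ! (length xs + j)) (?zs ! k))
      \<longleftrightarrow> (\<forall>x\<in>set xs. R (ys ! j) x) \<and> (\<forall>k<j. R (ys ! j) (ys ! k))" for j
    by (simp add: all_less_add_iff nth_append all_set_conv_all_nth)
  show ?thesis
    unfolding split prefix suffix by (simp add: left_records_def)
qed

lemma right_records_append:
  "right_records R (xs @ ys) =
     card {i. i < length xs \<and> (\<forall>j. i < j \<and> j < length xs \<longrightarrow> R (xs ! i) (xs ! j))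
        \<and> (\<forall>y\<in>set ys. R (xs ! i) y)}
     + right_records R ys"
proof -
  let ?zs = "xs @ ys"
  have split: "right_records R ?zs
      = card {i. i < length xs \<and> (\<forall>j. i < j \<and> j < length xs + length ys \<longrightarrow> R (?zs ! i) (?zs ! j))}
      + card {j. j < length ys \<and> (\<forall>k. length xs + j < k \<and> k < length xs + length ys
          \<longrightarrow> R (?zs ! (length xs + j)) (?zs ! k))}"
    unfolding right_records_def length_append by (rule card_less_add_split)
  have prefix: "{i. i < length xs \<and> (\<forall>j. i < j \<and> j < length xs + length ys \<longrightarrow> R (?zs ! i) (?zs ! j))}
      = {i. i < length xs \<and> (\<forall>j. i < j \<and> j < length xs \<longrightarrow> R (xs ! i) (xs ! j))
          \<and> (\<forall>y\<in>set ys. R (xs ! i) y)}"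
    by (intro Collect_cong conj_cong refl)
      (simp add: all_between_split_iff nth_append all_set_conv_all_nth)
  have suffix: "(\<forall>k. length xs + j < k \<and> k < length xs + length ys \<longrightarrow> R (?zs ! (length xs + j)) (?zs ! k))
      \<longleftrightarrow> (\<forall>k. j < k \<and> k < length ys \<longrightarrow> R (ys ! j) (ys ! k))" for j
    unfolding all_between_add_iff by simp
  show ?thesis
    unfolding split prefix suffix by (simp add: right_records_def)
qed

lemma left_records_append_dominating:
  assumes "\<forall>x\<in>set xs. \<forall>y\<in>set ys. R y x"
  shows "left_records R (xs @ ys) = left_records R xs + left_records R ys"
proof -
  have "{j. j < length ys \<and> (\<forall>x\<in>set xs. R (ys ! j) x) \<and> (\<forall>k<j. R (ys ! j) (ys ! k))}
      = {j. j < length ys \<and> (\<forall>k<j. R (ys ! j) (ys ! k))}"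
    using assms by auto
  then show ?thesis
    unfolding left_records_append by (simp add: left_records_def)
qed

lemma left_records_append_blocked:
  assumes "xs \<noteq> []" and "\<forall>x\<in>set xs. \<forall>y\<in>set ys. \<not> R y x"
  shows "left_records R (xs @ ys) = left_records R xs"
proof -
  have "{j. j < length ys \<and> (\<forall>x\<in>set xs. R (ys ! j) x) \<and> (\<forall>k<j. R (ys ! j) (ys ! k))} = {}"
    using assms by (auto dest: bspec[of _ _ "hd xs"])
  then show ?thesis
    by (simp add: left_records_append)
qed

lemma right_records_append_dominating:
  assumes "\<forall>x\<in>set xs. \<forall>y\<in>set ys. R x y"
  shows "right_records R (xs @ ys) = right_records R xs + right_records R ys"
proof -
  have "{i. i < length xs \<and> (\<forall>j. i < j \<and> j < length xs \<longrightarrow> R (xs ! i) (xs ! j)) \<and> (\<forall>y\<in>set ys. R (xs ! i) y)}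
      = {i. i < length xs \<and> (\<forall>j. i < j \<and> j < length xs \<longrightarrow> R (xs ! i) (xs ! j))}"
    using assms by auto
  then show ?thesis
    unfolding right_records_append by (simp add: right_records_def)
qed

lemma right_records_append_blocked:
  assumes "ys \<noteq> []" and "\<forall>x\<in>set xs. \<forall>y\<in>set ys. \<not> R x y"
  shows "right_records R (xs @ ys) = right_records R ys"
proof -
  have "{i. i < length xs \<and> (\<forall>j. i < j \<and> j < length xs \<longrightarrow> R (xs ! i) (xs ! j)) \<and> (\<forall>y\<in>set ys. R (xs ! i) y)} = {}"
    using assms by (auto dest: bspec[of _ _ "hd ys"])
  then show ?thesis
    by (simp add: right_records_append)
qed

lemma left_records_map: "left_records R (map f xs) = left_records (\<lambda>a b. R (f a) (f b)) xs"
  unfolding left_records_def by (intro arg_cong[where f = card] Collect_cong) auto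

lemma right_records_map: "right_records R (map f xs) = right_records (\<lambda>a b. R (f a) (f b)) xs"
  unfolding right_records_def by (intro arg_cong[where f = card] Collect_cong) auto

lemma left_records_cong:
  "(\<And>a b. a \<in> set xs \<Longrightarrow> b \<in> set xs \<Longrightarrow> R a b = R' a b) \<Longrightarrow> left_records R xs = left_records R' xs"
  unfolding left_records_def by (intro arg_cong[where f = card] Collect_cong) auto

lemma right_records_cong:
  "(\<And>a b. a \<in> set xs \<Longrightarrow> b \<in> set xs \<Longrightarrow> R a b = R' a b) \<Longrightarrow> right_records R xs = right_records R' xs"
  unfolding right_records_def by (intro arg_cong[where f = card] Collect_cong) auto

lemma length_psum [simp]: "length (psum a b) = length a + length b"
  by (simp add: psum_def)

lemma length_pskew [simp]: "length (pskew a b) = length a + length b"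
  by (simp add: pskew_def)

lemma psum_take_drop:
  "take (length a) (psum a b) = a" "drop (length a) (psum a b) = map (\<lambda>y. y + length a) b"
  by (simp_all add: psum_def)

lemma pskew_take_drop:
  "take (length a) (pskew a b) = map (\<lambda>x. x + length b) a" "drop (length a) (pskew a b) = b"
  by (simp_all add: pskew_def)

lemma psum_blocks_increase:
  assumes "set a \<subseteq> {1..length a}" "set b \<subseteq> {1..length b}"
  shows "\<forall>x\<in>set a. \<forall>y\<in>set (map (\<lambda>y. y + length a) b). x < y"
  using assms by fastforce

lemma pskew_blocks_decrease:
  assumes "set a \<subseteq> {1..length a}" "set b \<subseteq> {1..length b}"
  shows "\<forall>x\<in>set (map (\<lambda>x. x + length b) a). \<forall>y\<in>set b. y < x"
  using assms by fastforce

lemma records_psum: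
  assumes "set a \<subseteq> {1..length a}" "set b \<subseteq> {1..length b}" "a \<noteq> []" "b \<noteq> []"
  shows "lmax (psum a b) = lmax a + lmax b" and "rmax (psum a b) = rmax b"
    and "lmin (psum a b) = lmin a" and "rmin (psum a b) = rmin a + rmin b"
proof -
  note below = psum_blocks_increase[OF assms(1,2)]
  show "lmax (psum a b) = lmax a + lmax b" "rmin (psum a b) = rmin a + rmin b"
    using below unfolding psum_def lmax_eq_left_records rmin_eq_right_records
    by (simp_all add: left_records_append_dominating right_records_append_dominating
        left_records_map right_records_map)
  show "rmax (psum a b) = rmax b" "lmin (psum a b) = lmin a"
    using below assms(3,4) unfolding psum_def rmax_eq_right_records lmin_eq_left_records
    by (simp_all add: left_records_append_blocked right_records_append_blocked
        right_records_map less_not_sym)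
qed

lemma psum_assoc: "psum (psum a b) c = psum a (psum b c)"
  by (simp add: psum_def add.assoc)

lemma separable_range: "separable p \<Longrightarrow> p \<noteq> [] \<and> set p \<subseteq> {1..length p}"
  by (induction rule: separable.induct) (fastforce simp: psum_def pskew_def)+

lemma finite_separable_length: "finite {p. separable p \<and> length p = n}"
proof (rule finite_subset)
  show "{p. separable p \<and> length p = n} \<subseteq> {xs. set xs \<subseteq> {1..n} \<and> length xs = n}"
    using separable_range by blast
qed (simp add: finite_lists_length_eq)

section \<open>Complement\<close>

definition perm_complement :: "nat list \<Rightarrow> nat list" where
  "perm_complement p = map (\<lambda>x. Suc (length p) - x) p"

lemma length_perm_complement [simp]: "length (perm_complement p) = length p"
  by (simp add: perm_complement_def)

lemma perm_complement_involution:
  "set p \<subseteq> {1..length p} \<Longrightarrow> perm_complement (perm_complement p) = p"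
  by (auto simp: perm_complement_def intro!: map_idI)

lemma perm_complement_psum:
  assumes "set a \<subseteq> {1..length a}" "set b \<subseteq> {1..length b}"
  shows "perm_complement (psum a b) = pskew (perm_complement a) (perm_complement b)"
  using assms by (auto simp: perm_complement_def psum_def pskew_def)

lemma perm_complement_pskew:
  assumes "set a \<subseteq> {1..length a}" "set b \<subseteq> {1..length b}"
  shows "perm_complement (pskew a b) = psum (perm_complement a) (perm_complement b)"
  using assms by (auto simp: perm_complement_def psum_def pskew_def)

lemma separable_perm_complement: "separable p \<Longrightarrow> separable (perm_complement p)"
proof (induction rule: separable.induct)
  case one
  show ?case
    using separable.one by (simp add: perm_complement_def)
next
  case (plus a b)
  then show ?case
    using separable_range by (simp add: perm_complement_psum separable.minus)
next
  case (minus a b)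
  then show ?case
    using separable_range by (simp add: perm_complement_pskew separable.plus)
qed

lemma records_perm_complement:
  assumes "set p \<subseteq> {1..length p}"
  shows "lmax (perm_complement p) = lmin p" and "rmax (perm_complement p) = rmin p"
    and "lmin (perm_complement p) = lmax p" and "rmin (perm_complement p) = rmax p"
proof -
  have flip: "Suc (length p) - x < Suc (length p) - y \<longleftrightarrow> y < x" if "x \<in> set p" "y \<in> set p" for x y
    using assms that by auto
  show "lmax (perm_complement p) = lmin p" "lmin (perm_complement p) = lmax p"
    unfolding lmax_eq_left_records lmin_eq_left_records perm_complement_def left_records_map
    by (auto simp: flip intro: left_records_cong)
  show "rmax (perm_complement p) = rmin p" "rmin (perm_complement p) = rmax p"
    unfolding rmax_eq_right_records rmin_eq_right_records perm_complement_def right_records_map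
    by (auto simp: flip intro: right_records_cong)
qed

section \<open>Unique decomposition of separable permutations\<close>

lemma reducible_perm_iff:
  "reducible_perm p \<longleftrightarrow>
     (\<exists>k. 0 < k \<and> k < length p \<and> (\<forall>x\<in>set (take k p). \<forall>y\<in>set (drop k p). x < y))"
    (is "_ \<longleftrightarrow> (\<exists>k. 0 < k \<and> k < length p \<and> ?splits k)")
proof -
  have "(\<exists>i\<in>{2..length p}. ?splits (i - 1)) \<longleftrightarrow> (\<exists>k. 0 < k \<and> k < length p \<and> ?splits k)"
  proof
    assume "\<exists>i\<in>{2..length p}. ?splits (i - 1)"
    then obtain i where "i \<in> {2..length p}" "?splits (i - 1)" by blast
    then show "\<exists>k. 0 < k \<and> k < length p \<and> ?splits k" by (intro exI[of _ "i - 1"]) auto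
  next
    assume "\<exists>k. 0 < k \<and> k < length p \<and> ?splits k"
    then obtain k where "0 < k" "k < length p" "?splits k" by blast
    then show "\<exists>i\<in>{2..length p}. ?splits (i - 1)" by (intro bexI[of _ "Suc k"]) auto
  qed
  then show ?thesis
    unfolding reducible_perm_def irreducible_perm_def by auto
qed

definition skew_reducible :: "nat list \<Rightarrow> bool" where
  "skew_reducible p \<longleftrightarrow>
     (\<exists>k. 0 < k \<and> k < length p \<and> (\<forall>x\<in>set (take k p). \<forall>y\<in>set (drop k p). y < x))"

lemma not_reducible_and_skew_reducible: "\<not> (reducible_perm p \<and> skew_reducible p)"
proof
  have ends: "hd p \<in> set (take k p)" "last p \<in> set (drop k p)" if "0 < k" "k < length p" for k
  proof -
    have "take k p \<noteq> []" "drop k p \<noteq> []"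
      using that by auto
    then show "hd p \<in> set (take k p)" "last p \<in> set (drop k p)"
      using hd_in_set[of "take k p"] last_in_set[of "drop k p"] that by (simp_all add: hd_take last_drop)
  qed
  assume "reducible_perm p \<and> skew_reducible p"
  then obtain k k' where "0 < k" "k < length p" "\<forall>x\<in>set (take k p). \<forall>y\<in>set (drop k p). x < y"
    and "0 < k'" "k' < length p" "\<forall>x\<in>set (take k' p). \<forall>y\<in>set (drop k' p). y < x"
    unfolding reducible_perm_iff skew_reducible_def by blast
  then have "hd p < last p" "last p < hd p"
    using ends by blast+
  then show False
    by simp
qed

lemma reducible_psum:
  assumes "set a \<subseteq> {1..length a}" "set b \<subseteq> {1..length b}" "a \<noteq> []" "b \<noteq> []"
  shows "reducible_perm (psum a b)"
  unfolding reducible_perm_iff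
  using assms psum_blocks_increase[OF assms(1,2)]
  by (intro exI[of _ "length a"]) (simp add: psum_take_drop)

lemma skew_reducible_pskew:
  assumes "set a \<subseteq> {1..length a}" "set b \<subseteq> {1..length b}" "a \<noteq> []" "b \<noteq> []"
  shows "skew_reducible (pskew a b)"
  unfolding skew_reducible_def
  using assms pskew_blocks_decrease[OF assms(1,2)]
  by (intro exI[of _ "length a"]) (simp add: pskew_take_drop)

lemma reducible_perm_complement_iff:
  assumes "set p \<subseteq> {1..length p}"
  shows "reducible_perm (perm_complement p) \<longleftrightarrow> skew_reducible p"
proof -
  have flip: "Suc (length p) - x < Suc (length p) - y \<longleftrightarrow> y < x"
    if "x \<in> set (take k p)" "y \<in> set (drop k p)" for x y k
    using assms that by (auto dest!: in_set_takeD in_set_dropD)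
  show ?thesis
    unfolding reducible_perm_iff skew_reducible_def perm_complement_def
    by (simp add: take_map drop_map flip cong: ball_cong)
qed

lemma separable_perm_complement_reducible_iff:
  "separable p \<Longrightarrow> separable (perm_complement p) \<and> (reducible_perm (perm_complement p) \<longleftrightarrow> skew_reducible p)"
  using separable_perm_complement separable_range reducible_perm_complement_iff by blast

lemma not_reducible_one: "\<not> reducible_perm [1]" and not_skew_reducible_one: "\<not> skew_reducible [1]"
  by (simp_all add: reducible_perm_def skew_reducible_def)

lemma separable_trichotomy:
  assumes "separable p"
  shows "p = [1] \<or> reducible_perm p \<or> skew_reducible p"
  using assms
proof cases
  case (plus a b)
  then show ?thesis
    using separable_range[of a] separable_range[of b] by (simp add: reducible_psum)
next
  case (minus a b)
  then show ?thesis
    using separable_range[of a] separable_range[of b] by (simp add: skew_reducible_pskew)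
qed simp

lemma irreducible_perm_iff:
  assumes "separable p"
  shows "irreducible_perm p \<longleftrightarrow> \<not> reducible_perm p"
proof (cases "2 \<le> length p")
  case True
  then show ?thesis
    by (simp add: reducible_perm_def)
next
  case False
  moreover have "p \<noteq> []" "set p \<subseteq> {1..length p}"
    using separable_range[OF assms] by auto
  ultimately have "p = [1]"
    by (cases p) (auto simp: Suc_le_eq)
  then show ?thesis
    by (simp add: irreducible_perm_def reducible_perm_def)
qed

lemma reducible_psum_decomposition:
  assumes "separable p" "reducible_perm p"
  shows "\<exists>a b. separable a \<and> \<not> reducible_perm a \<and> separable b \<and> p = psum a b"
  using assms
proof (induction "length p" arbitrary: p rule: less_induct)
  case less
  from less.prems(1) show ?case
  proof cases
    case one
    then show ?thesis
      using less.prems(2) not_reducible_one by simp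
  next
    case (plus a1 b1)
    show ?thesis
    proof (cases "reducible_perm a1")
      case True
      have "length a1 < length p"
        using plus separable_range[of b1] by simp
      then obtain a b where "separable a" "\<not> reducible_perm a" "separable b" "a1 = psum a b"
        using less.hyps plus True by blast
      then show ?thesis
        using plus psum_assoc separable.plus by metis
    qed (use plus in blast)
  next
    case (minus a1 b1)
    then have "skew_reducible p"
      using separable_range[of a1] separable_range[of b1] by (simp add: skew_reducible_pskew)
    then show ?thesis
      using less.prems(2) not_reducible_and_skew_reducible by blast
  qed
qed

lemma psum_eq_psum_longer_reducible:
  assumes "psum a b = psum a' b'" "length a < length a'" "a \<noteq> []"
    "set a \<subseteq> {1..length a}" "set b \<subseteq> {1..length b}"
  shows "reducible_perm a'"
proof -
  define c where "c = take (length a' - length a) (map (\<lambda>y. y + length a) b)"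
  have "a' = take (length a') (psum a b)"
    using assms(1) psum_take_drop(1)[of a' b'] by simp
  then have a': "a' = a @ c"
    using assms(2) by (simp add: psum_def c_def)
  have "\<forall>x\<in>set a. \<forall>y\<in>set c. x < y"
    using psum_blocks_increase[OF assms(4,5)] unfolding c_def by (blast dest: in_set_takeD)
  then show ?thesis
    unfolding reducible_perm_iff a' using assms(2,3) a'
    by (intro exI[of _ "length a"]) simp
qed

lemma psum_irreducible_injective:
  assumes "separable a" "separable b" "separable a'" "separable b'"
    and "\<not> reducible_perm a" "\<not> reducible_perm a'" and eq: "psum a b = psum a' b'"
  shows "a = a' \<and> b = b'"
proof -
  have "a \<noteq> []" "set a \<subseteq> {1..length a}" "set b \<subseteq> {1..length b}"
    and "a' \<noteq> []" "set a' \<subseteq> {1..length a'}" "set b' \<subseteq> {1..length b'}"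
    using separable_range assms(1-4) by auto
  then have "\<not> length a < length a'" "\<not> length a' < length a"
    using psum_eq_psum_longer_reducible[OF eq] psum_eq_psum_longer_reducible[OF eq[symmetric]]
      assms(5,6) by auto
  then have len: "length a = length a'"
    by simp
  have "a = take (length a) (psum a b)"
    by (simp add: psum_take_drop)
  also have "\<dots> = take (length a') (psum a' b')"
    using eq len by simp
  finally have "a = a'"
    by (simp add: psum_take_drop)
  have "map (\<lambda>y. y + length a) b = drop (length a) (psum a b)"
    by (simp add: psum_take_drop)
  also have "\<dots> = map (\<lambda>y. y + length a) b'"
    using eq len by (simp add: psum_take_drop)
  finally have "b = b'"
    by (simp add: inj_map_eq_map inj_on_def)
  with \<open>a = a'\<close> show ?thesis ..
qed

section \<open>Generating functions of statistics\<close>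

lemma Abs_fps_sum_mult_nth:
  fixes w1 :: "'b list \<Rightarrow> 'a::comm_semiring_1" and w2 :: "'c list \<Rightarrow> 'a"
  assumes "\<And>n. finite {a. A a \<and> length a = n}" "\<And>n. finite {b. B b \<and> length b = n}"
  shows "(Abs_fps (\<lambda>n. \<Sum>a | A a \<and> length a = n. w1 a) * Abs_fps (\<lambda>n. \<Sum>b | B b \<and> length b = n. w2 b)) $ n
    = (\<Sum>(a, b) | A a \<and> B b \<and> length a + length b = n. w1 a * w2 b)"
proof -
  let ?A = "\<lambda>i. {a. A a \<and> length a = i}" and ?B = "\<lambda>i. {b. B b \<and> length b = i}"
  have pairs: "{(a, b). A a \<and> B b \<and> length a + length b = n} = (\<Union>i\<in>{0..n}. ?A i \<times> ?B (n - i))"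
    by auto
  have "(Abs_fps (\<lambda>n. \<Sum>a\<in>?A n. w1 a) * Abs_fps (\<lambda>n. \<Sum>b\<in>?B n. w2 b)) $ n
      = (\<Sum>i=0..n. \<Sum>(a, b)\<in>?A i \<times> ?B (n - i). w1 a * w2 b)"
    by (simp add: fps_mult_nth sum_product sum.cartesian_product)
  also have "\<dots> = (\<Sum>(a, b)\<in>(\<Union>i\<in>{0..n}. ?A i \<times> ?B (n - i)). w1 a * w2 b)"
    by (rule sum.UNION_disjoint[symmetric]) (use assms in auto)
  finally show ?thesis
    unfolding pairs .
qed

lemma Abs_fps_sum_unique_factorization:
  fixes h :: "'b list \<Rightarrow> 'c list \<Rightarrow> 'd list" and w :: "'d list \<Rightarrow> 'a::comm_semiring_1"
  assumes "\<And>n. finite {a. A a \<and> length a = n}" "\<And>n. finite {b. B b \<and> length b = n}"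
    and length: "\<And>a b. A a \<Longrightarrow> B b \<Longrightarrow> length (h a b) = length a + length b"
    and injective: "\<And>a b a' b'. A a \<Longrightarrow> B b \<Longrightarrow> A a' \<Longrightarrow> B b' \<Longrightarrow> h a b = h a' b' \<Longrightarrow> a = a' \<and> b = b'"
    and onto: "\<And>p. C p \<longleftrightarrow> (\<exists>a b. A a \<and> B b \<and> p = h a b)"
    and weight: "\<And>a b. A a \<Longrightarrow> B b \<Longrightarrow> w (h a b) = w1 a * w2 b"
  shows "Abs_fps (\<lambda>n. \<Sum>p | C p \<and> length p = n. w p)
    = Abs_fps (\<lambda>n. \<Sum>a | A a \<and> length a = n. w1 a) * Abs_fps (\<lambda>n. \<Sum>b | B b \<and> length b = n. w2 b)"
proof (rule fps_ext)
  fix n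
  let ?P = "{(a, b). A a \<and> B b \<and> length a + length b = n}"
  have "bij_betw (\<lambda>(a, b). h a b) ?P {p. C p \<and> length p = n}"
    unfolding bij_betw_def inj_on_def using length injective onto by fastforce
  then have "(\<Sum>p | C p \<and> length p = n. w p) = (\<Sum>(a, b)\<in>?P. w (h a b))"
    by (simp add: sum.reindex_bij_betw[symmetric] case_prod_beta)
  also have "\<dots> = (\<Sum>(a, b)\<in>?P. w1 a * w2 b)"
    by (rule sum.cong) (auto simp: weight)
  finally show "Abs_fps (\<lambda>n. \<Sum>p | C p \<and> length p = n. w p) $ n
    = (Abs_fps (\<lambda>n. \<Sum>a | A a \<and> length a = n. w1 a) * Abs_fps (\<lambda>n. \<Sum>b | B b \<and> length b = n. w2 b)) $ n"
    by (simp add: Abs_fps_sum_mult_nth[OF assms(1,2)])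
qed

definition stat_weight :: "complex \<Rightarrow> complex \<Rightarrow> complex \<Rightarrow> complex \<Rightarrow> nat list \<Rightarrow> complex" where
  "stat_weight x1 x2 x3 x4 p = x1 ^ lmax p * x2 ^ rmax p * x3 ^ lmin p * x4 ^ rmin p"

definition stat_gf :: "(nat list \<Rightarrow> bool) \<Rightarrow> complex \<Rightarrow> complex \<Rightarrow> complex \<Rightarrow> complex \<Rightarrow> complex fps" where
  "stat_gf C x1 x2 x3 x4 = Abs_fps (\<lambda>n. \<Sum>p | C p \<and> length p = n. stat_weight x1 x2 x3 x4 p)"

abbreviation "gf_sep \<equiv> stat_gf separable"

abbreviation "gf_red \<equiv> stat_gf (\<lambda>p. separable p \<and> reducible_perm p)"

abbreviation "gf_skew \<equiv> stat_gf (\<lambda>p. separable p \<and> skew_reducible p)"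

lemma finite_separable_subset_length:
  "(\<And>p. C p \<Longrightarrow> separable p) \<Longrightarrow> finite {p. C p \<and> length p = n}"
  by (rule finite_subset[OF _ finite_separable_length[of n]]) auto

lemma stat_gf_disjoint_union:
  assumes "\<And>p. A p \<Longrightarrow> separable p" "\<And>p. B p \<Longrightarrow> separable p" "\<And>p. A p \<Longrightarrow> \<not> B p"
  shows "stat_gf (\<lambda>p. A p \<or> B p) x1 x2 x3 x4 = stat_gf A x1 x2 x3 x4 + stat_gf B x1 x2 x3 x4"
proof (rule fps_ext)
  fix n
  have "{p. (A p \<or> B p) \<and> length p = n} = {p. A p \<and> length p = n} \<union> {p. B p \<and> length p = n}"
    by auto
  then show "stat_gf (\<lambda>p. A p \<or> B p) x1 x2 x3 x4 $ n = (stat_gf A x1 x2 x3 x4 + stat_gf B x1 x2 x3 x4) $ n"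
    unfolding stat_gf_def fps_add_nth fps_nth_Abs_fps
    by (simp add: sum.union_disjoint finite_separable_subset_length assms disjoint_iff)
qed

lemma stat_gf_one: "stat_gf (\<lambda>p. p = [1]) x1 x2 x3 x4 = fps_const (x1 * x2 * x3 * x4) * fps_X"
proof (rule fps_ext)
  fix n
  have "{i. i < length [1::nat] \<and> P i} = (if P 0 then {0} else {})" for P
    by auto
  then have weight: "stat_weight x1 x2 x3 x4 [1] = x1 * x2 * x3 * x4"
    unfolding stat_weight_def lmax_def rmax_def lmin_def rmin_def by simp
  have support: "{p. p = [1] \<and> length p = n} = (if n = 1 then {[1]} else {})"
    by auto
  show "stat_gf (\<lambda>p. p = [1]) x1 x2 x3 x4 $ n = (fps_const (x1 * x2 * x3 * x4) * fps_X) $ n"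
    unfolding stat_gf_def fps_nth_Abs_fps support using weight by simp
qed

lemma stat_gf_separable_split:
  "gf_sep x1 x2 x3 x4 = fps_const (x1 * x2 * x3 * x4) * fps_X + gf_red x1 x2 x3 x4 + gf_skew x1 x2 x3 x4"
proof -
  have split: "separable
      = (\<lambda>p. p = [1] \<or> (separable p \<and> reducible_perm p \<or> separable p \<and> skew_reducible p))"
    using separable_trichotomy separable.one by blast
  have "stat_gf (\<lambda>p. p = [1] \<or> (separable p \<and> reducible_perm p \<or> separable p \<and> skew_reducible p)) x1 x2 x3 x4
      = stat_gf (\<lambda>p. p = [1]) x1 x2 x3 x4
        + stat_gf (\<lambda>p. separable p \<and> reducible_perm p \<or> separable p \<and> skew_reducible p) x1 x2 x3 x4"
    by (rule stat_gf_disjoint_union)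
      (use separable.one not_reducible_one not_skew_reducible_one in auto)
  also have "stat_gf (\<lambda>p. separable p \<and> reducible_perm p \<or> separable p \<and> skew_reducible p) x1 x2 x3 x4
      = gf_red x1 x2 x3 x4 + gf_skew x1 x2 x3 x4"
    by (rule stat_gf_disjoint_union) (use not_reducible_and_skew_reducible in auto)
  finally show ?thesis
    unfolding split[symmetric] stat_gf_one by (simp add: add.assoc)
qed

lemma stat_gf_not_reducible:
  "stat_gf (\<lambda>p. separable p \<and> \<not> reducible_perm p) x1 x2 x3 x4
     = fps_const (x1 * x2 * x3 * x4) * fps_X + gf_skew x1 x2 x3 x4"
proof -
  have split: "(\<lambda>p. separable p \<and> \<not> reducible_perm p) = (\<lambda>p. p = [1] \<or> (separable p \<and> skew_reducible p))"
    using separable_trichotomy separable.one not_reducible_and_skew_reducible not_reducible_one by blast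
  have "stat_gf (\<lambda>p. p = [1] \<or> (separable p \<and> skew_reducible p)) x1 x2 x3 x4
      = stat_gf (\<lambda>p. p = [1]) x1 x2 x3 x4 + gf_skew x1 x2 x3 x4"
    by (rule stat_gf_disjoint_union) (use separable.one not_skew_reducible_one in auto)
  then show ?thesis
    unfolding split stat_gf_one .
qed

lemma stat_weight_psum:
  assumes "separable a" "separable b"
  shows "stat_weight x1 x2 x3 x4 (psum a b) = stat_weight x1 1 x3 x4 a * stat_weight x1 x2 1 x4 b"
  using records_psum[of a b] separable_range[OF assms(1)] separable_range[OF assms(2)]
  by (simp add: stat_weight_def power_add mult_ac)

lemma gf_red_factorization:
  "gf_red x1 x2 x3 x4 = stat_gf (\<lambda>p. separable p \<and> \<not> reducible_perm p) x1 1 x3 x4 * gf_sep x1 x2 1 x4"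
  unfolding stat_gf_def
proof (rule Abs_fps_sum_unique_factorization[where h = psum])
  show "finite {a. (separable a \<and> \<not> reducible_perm a) \<and> length a = n}" for n
    by (rule finite_separable_subset_length) simp
  show "finite {b. separable b \<and> length b = n}" for n
    by (rule finite_separable_length)
  show "length (psum a b) = length a + length b" for a b
    by simp
  show "a = a' \<and> b = b'"
    if "separable a \<and> \<not> reducible_perm a" "separable b" "separable a' \<and> \<not> reducible_perm a'" "separable b'"
      and "psum a b = psum a' b'" for a b a' b'
    using that by (intro psum_irreducible_injective) simp_all
  show "stat_weight x1 x2 x3 x4 (psum a b) = stat_weight x1 1 x3 x4 a * stat_weight x1 x2 1 x4 b"
    if "separable a \<and> \<not> reducible_perm a" "separable b" for a b
    using that by (simp add: stat_weight_psum)
  show "(separable p \<and> reducible_perm p) \<longleftrightarrow>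
      (\<exists>a b. (separable a \<and> \<not> reducible_perm a) \<and> separable b \<and> p = psum a b)" for p
  proof
    assume "separable p \<and> reducible_perm p"
    then show "\<exists>a b. (separable a \<and> \<not> reducible_perm a) \<and> separable b \<and> p = psum a b"
      using reducible_psum_decomposition by blast
  next
    assume "\<exists>a b. (separable a \<and> \<not> reducible_perm a) \<and> separable b \<and> p = psum a b"
    then obtain a b where "separable a" "separable b" "p = psum a b"
      by blast
    then show "separable p \<and> reducible_perm p"
      using separable.plus reducible_psum separable_range by metis
  qed
qed

lemma stat_gf_perm_complement:
  assumes "\<And>p. C p \<Longrightarrow> separable p"
  shows "stat_gf C x1 x2 x3 x4 = stat_gf (\<lambda>p. separable p \<and> C (perm_complement p)) x3 x4 x1 x2"
proof (rule fps_ext)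
  fix n
  have "(\<Sum>p | C p \<and> length p = n. stat_weight x1 x2 x3 x4 p)
      = (\<Sum>q | (separable q \<and> C (perm_complement q)) \<and> length q = n. stat_weight x3 x4 x1 x2 q)"
  proof (rule sum.reindex_bij_witness[where i = perm_complement and j = perm_complement])
    fix p
    assume "p \<in> {p. C p \<and> length p = n}"
    then have "separable p" "C p" "length p = n"
      using assms by auto
    moreover have "set p \<subseteq> {1..length p}"
      using separable_range[OF \<open>separable p\<close>] by blast
    ultimately show "perm_complement (perm_complement p) = p"
      and "perm_complement p \<in> {q. (separable q \<and> C (perm_complement q)) \<and> length q = n}"
      and "stat_weight x3 x4 x1 x2 (perm_complement p) = stat_weight x1 x2 x3 x4 p"
      by (simp_all add: perm_complement_involution separable_perm_complement records_perm_complement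
          stat_weight_def mult_ac)
  next
    fix q
    assume "q \<in> {q. (separable q \<and> C (perm_complement q)) \<and> length q = n}"
    then show "perm_complement (perm_complement q) = q"
      and "perm_complement q \<in> {p. C p \<and> length p = n}"
      using separable_range perm_complement_involution by auto
  qed
  then show "stat_gf C x1 x2 x3 x4 $ n
      = stat_gf (\<lambda>p. separable p \<and> C (perm_complement p)) x3 x4 x1 x2 $ n"
    by (simp add: stat_gf_def)
qed

lemma gf_sep_swap: "gf_sep x1 x2 x3 x4 = gf_sep x3 x4 x1 x2"
proof -
  have "(\<lambda>p. separable p \<and> separable (perm_complement p)) = separable"
    using separable_perm_complement by blast
  then show ?thesis
    using stat_gf_perm_complement[of separable x1 x2 x3 x4] by simp
qed

lemma gf_skew_eq_gf_red_swap: "gf_skew x1 x2 x3 x4 = gf_red x3 x4 x1 x2"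
proof -
  have "(\<lambda>p. separable p \<and> separable (perm_complement p) \<and> reducible_perm (perm_complement p))
      = (\<lambda>p. separable p \<and> skew_reducible p)"
    using separable_perm_complement_reducible_iff by blast
  then show ?thesis
    using stat_gf_perm_complement[of "\<lambda>p. separable p \<and> reducible_perm p" x3 x4 x1 x2] by simp
qed

section \<open>Functional equations\<close>

lemma gf_red_eq:
  "gf_red x1 x2 x3 x4 = (fps_const (x1 * x3 * x4) * fps_X + gf_skew x1 1 x3 x4) * gf_sep x1 x2 1 x4"
  using gf_red_factorization[of x1 x2 x3 x4] stat_gf_not_reducible[of x1 1 x3 x4] by simp

lemma gf_skew_eq:
  "gf_skew x1 x2 x3 x4 = (fps_const (x1 * x2 * x3) * fps_X + gf_red x1 x2 x3 1) * gf_sep 1 x2 x3 x4"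
  using gf_red_eq[of x3 x4 x1 x2] gf_skew_eq_gf_red_swap[of x1 x2 x3 x4]
    gf_skew_eq_gf_red_swap[of x3 1 x1 x2] gf_sep_swap[of x3 x4 1 x2]
  by (simp add: mult_ac)

lemma gf_sep_skew_factorization:
  "gf_sep x1 x2 x3 1 = (fps_const (x1 * x2 * x3) * fps_X + gf_red x1 x2 x3 1) * (1 + gf_sep 1 x2 x3 1)"
  using stat_gf_separable_split[of x1 x2 x3 1] gf_skew_eq[of x1 x2 x3 1] by (simp add: algebra_simps)

lemma gf_sep_plus_factorization:
  "gf_sep x1 1 x3 x4 = (fps_const (x1 * x3 * x4) * fps_X + gf_skew x1 1 x3 x4) * (1 + gf_sep x1 1 1 x4)"
  using stat_gf_separable_split[of x1 1 x3 x4] gf_red_eq[of x1 1 x3 x4] by (simp add: algebra_simps)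

lemma Sgf_eq_gf_sep: "Sgf z = gf_sep 1 z 1 1"
  by (simp add: Sgf_def stat_gf_def stat_weight_def)

lemma Sgf_nth_0 [simp]: "Sgf z $ 0 = 0"
proof -
  have empty: "{p. separable p \<and> length p = 0} = {}"
    using separable_range by auto
  show ?thesis
    unfolding Sgf_def fps_nth_Abs_fps empty by simp
qed

lemma Sgf_plus_one_nonzero: "1 + Sgf z \<noteq> 0"
  by (rule fps_nonzeroI[of _ 0]) simp

lemma fps_quadratic_root_unique:
  fixes c q y1 y2 :: "'a::idom fps"
  assumes "c $ 0 = 0" "q $ 0 = 0"
    and "c * y1 ^ 2 + (q - 1) * y1 + q = 0" "c * y2 ^ 2 + (q - 1) * y2 + q = 0"
  shows "y1 = y2"
proof -
  have "(y1 - y2) * (c * (y1 + y2) + q - 1) = 0"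
    using assms(3,4) by algebra
  moreover have "c * (y1 + y2) + q - 1 \<noteq> 0"
    using assms(1,2) by (intro fps_nonzeroI[of _ 0]) simp
  ultimately show ?thesis
    by simp
qed

lemma Sgf_quadratic:
  "Sgf 1 * Sgf z ^ 2 + (fps_const z * fps_X * (1 + Sgf 1) - 1) * Sgf z + fps_const z * fps_X * (1 + Sgf 1) = 0"
proof -
  have "Sgf z = (fps_const z * fps_X + gf_red 1 z 1 1) * (1 + Sgf z)"
    using gf_sep_skew_factorization[of 1 z 1] by (simp add: Sgf_eq_gf_sep)
  moreover have "gf_red 1 z 1 1 = (fps_X + gf_skew 1 1 1 1) * Sgf z"
    using gf_red_eq[of 1 z 1 1] by (simp add: Sgf_eq_gf_sep)
  moreover have "Sgf 1 = (fps_X + gf_skew 1 1 1 1) * (1 + Sgf 1)"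
    using gf_sep_plus_factorization[of 1 1 1] by (simp add: Sgf_eq_gf_sep)
  ultimately show ?thesis
    by algebra
qed

lemma gf_sep_lmax_eq_Sgf: "gf_sep z 1 1 1 = Sgf z"
proof (rule fps_quadratic_root_unique)
  show "Sgf 1 * gf_sep z 1 1 1 ^ 2 + (fps_const z * fps_X * (1 + Sgf 1) - 1) * gf_sep z 1 1 1
      + fps_const z * fps_X * (1 + Sgf 1) = 0"
  proof -
    have "gf_sep z 1 1 1 = (fps_const z * fps_X + gf_skew z 1 1 1) * (1 + gf_sep z 1 1 1)"
      using gf_sep_plus_factorization[of z 1 1] by simp
    moreover have "gf_skew z 1 1 1 = (fps_const z * fps_X + gf_red z 1 1 1) * Sgf 1"
      using gf_skew_eq[of z 1 1 1] by (simp add: Sgf_eq_gf_sep)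
    moreover have "gf_red z 1 1 1 = (fps_const z * fps_X + gf_skew z 1 1 1) * gf_sep z 1 1 1"
      using gf_red_eq[of z 1 1 1] by simp
    ultimately show ?thesis
      by algebra
  qed
qed (simp_all add: Sgf_quadratic)

lemma gf_sep_lmin_eq_Sgf: "gf_sep 1 1 z 1 = Sgf z"
  using gf_sep_swap[of 1 1 z 1] gf_sep_lmax_eq_Sgf by simp

lemma gf_sep_rmin_eq_Sgf: "gf_sep 1 1 1 z = Sgf z"
  using gf_sep_swap[of 1 1 1 z] Sgf_eq_gf_sep by simp

lemma gf_sep_lmax_rmax:
  "gf_sep a b 1 1 * (1 - Sgf a * Sgf b) = fps_const (a * b) * fps_X * (1 + Sgf a) * (1 + Sgf b)"
proof -
  have "gf_sep a b 1 1 = (fps_const (a * b) * fps_X + gf_red a b 1 1) * (1 + Sgf b)"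
    using gf_sep_skew_factorization[of a b 1] by (simp add: Sgf_eq_gf_sep)
  moreover have "gf_red a b 1 1 = (fps_const a * fps_X + gf_skew a 1 1 1) * gf_sep a b 1 1"
    using gf_red_eq[of a b 1 1] by simp
  moreover have "Sgf a = (fps_const a * fps_X + gf_skew a 1 1 1) * (1 + Sgf a)"
    using gf_sep_plus_factorization[of a 1 1] by (simp add: gf_sep_lmax_eq_Sgf)
  ultimately show ?thesis
    by algebra
qed

lemma gf_red_lmax_rmax:
  "(fps_const (a * b) * fps_X + gf_red a b 1 1) * (1 - Sgf a * Sgf b) = fps_const (a * b) * fps_X * (1 + Sgf a)"
proof -
  have "gf_sep a b 1 1 = (fps_const (a * b) * fps_X + gf_red a b 1 1) * (1 + Sgf b)"
    using gf_sep_skew_factorization[of a b 1] by (simp add: Sgf_eq_gf_sep)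
  then have "((fps_const (a * b) * fps_X + gf_red a b 1 1) * (1 - Sgf a * Sgf b)) * (1 + Sgf b)
      = (fps_const (a * b) * fps_X * (1 + Sgf a)) * (1 + Sgf b)"
    using gf_sep_lmax_rmax[of a b] by (simp add: mult_ac)
  moreover have "1 + Sgf b \<noteq> 0"
    by (rule Sgf_plus_one_nonzero)
  ultimately show ?thesis
    by simp
qed

lemma gf_skew_lmax_lmin:
  "(fps_const (a * b) * fps_X + gf_skew a 1 b 1) * (1 - Sgf a * Sgf b) = fps_const (a * b) * fps_X * (1 + Sgf b)"
proof -
  have "gf_skew a 1 b 1 = (fps_const (a * b) * fps_X + gf_red a 1 b 1) * Sgf b"
    using gf_skew_eq[of a 1 b 1] by (simp add: gf_sep_lmin_eq_Sgf)
  moreover have "gf_red a 1 b 1 = (fps_const (a * b) * fps_X + gf_skew a 1 b 1) * Sgf a"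
    using gf_red_eq[of a 1 b 1] by (simp add: gf_sep_lmax_eq_Sgf)
  ultimately show ?thesis
    by algebra
qed

lemma gf_sep_rmax_rmin:
  "gf_sep 1 a 1 b * (1 - Sgf a * Sgf b) = fps_const (a * b) * fps_X * (1 + Sgf a) * (1 + Sgf b)"
proof -
  have "gf_sep 1 a 1 b = fps_const (a * b) * fps_X + gf_red 1 a 1 b + gf_skew 1 a 1 b"
    using stat_gf_separable_split[of 1 a 1 b] by simp
  moreover have "gf_red 1 a 1 b = (fps_const b * fps_X + gf_skew 1 1 1 b) * gf_sep 1 a 1 b"
    using gf_red_eq[of 1 a 1 b] by simp
  moreover have "gf_skew 1 a 1 b = (fps_const a * fps_X + gf_red 1 a 1 1) * gf_sep 1 a 1 b"
    using gf_skew_eq[of 1 a 1 b] by simp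
  moreover have "Sgf b = (fps_const b * fps_X + gf_skew 1 1 1 b) * (1 + Sgf b)"
    using gf_sep_plus_factorization[of 1 1 b] by (simp add: gf_sep_rmin_eq_Sgf)
  moreover have "Sgf a = (fps_const a * fps_X + gf_red 1 a 1 1) * (1 + Sgf a)"
    using gf_sep_skew_factorization[of 1 a 1] by (simp add: Sgf_eq_gf_sep)
  ultimately show ?thesis
    by algebra
qed

lemma gf_red_rmax_lmin: "fps_const (a * b) * fps_X + gf_red 1 a b 1 = Agf a b + fps_X * fps_const (a * b)"
proof -
  define i where "i = inverse (Sgf b + 1)"
  have i: "(Sgf b + 1) * i = 1"
    unfolding i_def by (rule inverse_mult_eq_1') simp
  have "Agf a b = Sgf a * (fps_const b * fps_X + Sgf b ^ 2 * i)"
    unfolding Agf_def i_def by (simp add: fps_divide_unit)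
  moreover have "gf_red 1 a b 1 = (fps_const b * fps_X + gf_red b 1 1 1) * Sgf a"
    using gf_red_eq[of 1 a b 1] gf_skew_eq_gf_red_swap[of 1 1 b 1] by (simp add: Sgf_eq_gf_sep)
  moreover have "gf_red b 1 1 1 = (fps_const b * fps_X + gf_skew b 1 1 1) * Sgf b"
    using gf_red_eq[of b 1 1 1] by (simp add: gf_sep_lmax_eq_Sgf)
  moreover have "Sgf b = (fps_const b * fps_X + gf_skew b 1 1 1) * (1 + Sgf b)"
    using gf_sep_plus_factorization[of b 1 1] by (simp add: gf_sep_lmax_eq_Sgf)
  moreover have "fps_const (a * b) = fps_const a * fps_const b"
    by simp
  ultimately show ?thesis
    using i by algebra
qed

section \<open>The trivariate generating functions\<close>

lemma Egf_minus_linear_term: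
  assumes "q * (1 - Sgf z1 * Sgf z3) = fps_const (z1 * z3) * fps_X * (1 + Sgf z3)"
    and "k * (1 - Sgf z1 * Sgf z2) = fps_const (z1 * z2) * fps_X * (1 + Sgf z1) * (1 + Sgf z2)"
  shows "q * k = Egf z1 z2 z3 - fps_const (z1 * z2 * z3) * fps_X"
proof -
  let ?den = "(1 - Sgf z1 * Sgf z3) * (1 - Sgf z1 * Sgf z2)"
  have "?den \<noteq> 0"
    by (rule fps_nonzeroI[of _ 0]) simp
  moreover have "fps_const (z1 ^ 2 * z2 * z3) = fps_const (z1 * z3) * fps_const (z1 * z2)"
    by (simp add: power2_eq_square mult_ac)
  then have "(Sgf z1 + 1) * (Sgf z2 + 1) * (Sgf z3 + 1) * fps_X ^ 2 * fps_const (z1 ^ 2 * z2 * z3)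
      = q * k * ?den"
    using assms by algebra
  ultimately show ?thesis
    by (simp add: Egf_def)
qed

lemma gf_red_lmax_rmax_lmin: "gf_red z1 z2 z3 1 = Egf z1 z2 z3 - fps_const (z1 * z2 * z3) * fps_X"
proof -
  have "gf_red z1 z2 z3 1 = (fps_const (z1 * z3) * fps_X + gf_skew z1 1 z3 1) * gf_sep z1 z2 1 1"
    using gf_red_eq[of z1 z2 z3 1] by simp
  then show ?thesis
    using Egf_minus_linear_term[OF gf_skew_lmax_lmin gf_sep_lmax_rmax] by simp
qed

lemma gf_red_rmin_rmax_lmin: "gf_red 1 z2 z3 z1 = Egf z1 z2 z3 - fps_const (z1 * z2 * z3) * fps_X"
proof -
  have "(fps_const (z1 * z3) * fps_X + gf_red z3 z1 1 1) * (1 - Sgf z1 * Sgf z3)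
      = fps_const (z1 * z3) * fps_X * (1 + Sgf z3)"
    using gf_red_lmax_rmax[of z3 z1] by (simp add: ac_simps)
  moreover have "gf_sep 1 z2 1 z1 * (1 - Sgf z1 * Sgf z2) = fps_const (z1 * z2) * fps_X * (1 + Sgf z1) * (1 + Sgf z2)"
    using gf_sep_rmax_rmin[of z2 z1] by (simp add: ac_simps)
  ultimately have "(fps_const (z1 * z3) * fps_X + gf_red z3 z1 1 1) * gf_sep 1 z2 1 z1
      = Egf z1 z2 z3 - fps_const (z1 * z2 * z3) * fps_X"
    by (rule Egf_minus_linear_term)
  moreover have "gf_red 1 z2 z3 z1 = (fps_const (z1 * z3) * fps_X + gf_red z3 z1 1 1) * gf_sep 1 z2 1 z1"
    using gf_red_eq[of 1 z2 z3 z1] gf_skew_eq_gf_red_swap[of 1 1 z3 z1] by (simp add: mult.commute)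
  ultimately show ?thesis
    by simp
qed

lemma gf_sep_lmax_rmax_lmin: "gf_sep z1 z2 z3 1 * Dgf z2 z3 = Egf z1 z2 z3"
proof -
  have "gf_sep z1 z2 z3 1 = Egf z1 z2 z3 * (1 + gf_sep 1 z2 z3 1)"
    using gf_sep_skew_factorization[of z1 z2 z3] gf_red_lmax_rmax_lmin by simp
  moreover have "gf_sep 1 z2 z3 1 = (1 - Dgf z2 z3) * (1 + gf_sep 1 z2 z3 1)"
    using gf_sep_skew_factorization[of 1 z2 z3] gf_red_rmax_lmin[of z2 z3] by (simp add: Dgf_def)
  ultimately show ?thesis
    by algebra
qed

lemma gf_sep_rmin_rmax_lmin: "gf_sep 1 z2 z3 z1 * Dgf z2 z3 = Egf z1 z2 z3"
proof -
  have "gf_sep 1 z2 z3 z1 = fps_const (z1 * z2 * z3) * fps_X + gf_red 1 z2 z3 z1 + gf_skew 1 z2 z3 z1"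
    using stat_gf_separable_split[of 1 z2 z3 z1] by (simp add: mult_ac)
  moreover have "gf_skew 1 z2 z3 z1 = (1 - Dgf z2 z3) * gf_sep 1 z2 z3 z1"
    using gf_skew_eq[of 1 z2 z3 z1] gf_red_rmax_lmin[of z2 z3] by (simp add: Dgf_def)
  ultimately show ?thesis
    using gf_red_rmin_rmax_lmin[of z2 z3 z1] by algebra
qed

lemma separable_gf_closed_forms:
  assumes sep: "gf_sep x1 x2 x3 x4 * Dgf z2 z3 = Egf z1 z2 z3"
    and red: "gf_red x1 x2 x3 x4 = Egf z1 z2 z3 - fps_const (z1 * z2 * z3) * fps_X"
    and weight: "x1 * x2 * x3 * x4 = z1 * z2 * z3"
  defines "I \<equiv> (fps_const (z1 * z2 * z3) * fps_X + (Agf z2 z3 + fps_X * fps_const (z2 * z3))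
      * (Egf z1 z2 z3 - fps_const (z1 * z2 * z3) * fps_X)) / Dgf z2 z3"
  shows "gf_sep x1 x2 x3 x4 = Egf z1 z2 z3 / Dgf z2 z3"
    and "gf_sep x3 x4 x1 x2 = Egf z1 z2 z3 / Dgf z2 z3"
    and "stat_gf (\<lambda>p. separable p \<and> \<not> reducible_perm p) x1 x2 x3 x4 = I"
    and "stat_gf (\<lambda>p. separable p \<and> \<not> reducible_perm p) x3 x4 x1 x2 = Egf z1 z2 z3"
    and "gf_red x3 x4 x1 x2 = - fps_const (z1 * z2 * z3) * fps_X + I"
proof -
  have D: "Dgf z2 z3 \<noteq> 0"
    by (rule fps_nonzeroI[of _ 0]) (simp add: Dgf_def Agf_def)
  show "gf_sep x1 x2 x3 x4 = Egf z1 z2 z3 / Dgf z2 z3"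
    using sep D by (metis nonzero_mult_div_cancel_right)
  then show "gf_sep x3 x4 x1 x2 = Egf z1 z2 z3 / Dgf z2 z3"
    by (simp add: gf_sep_swap)
  have split: "gf_sep x1 x2 x3 x4 = fps_const (z1 * z2 * z3) * fps_X + gf_red x1 x2 x3 x4 + gf_skew x1 x2 x3 x4"
    using stat_gf_separable_split[of x1 x2 x3 x4] by (simp add: weight)
  have "(gf_sep x1 x2 x3 x4 - gf_red x1 x2 x3 x4) * Dgf z2 z3
      = Egf z1 z2 z3 - (Egf z1 z2 z3 - fps_const (z1 * z2 * z3) * fps_X) * Dgf z2 z3"
    using sep red by (simp add: left_diff_distrib)
  also have "\<dots> = fps_const (z1 * z2 * z3) * fps_X + (1 - Dgf z2 z3) * (Egf z1 z2 z3 - fps_const (z1 * z2 * z3) * fps_X)"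
    by (simp add: algebra_simps)
  also have "1 - Dgf z2 z3 = Agf z2 z3 + fps_X * fps_const (z2 * z3)"
    by (simp add: Dgf_def)
  finally have "(gf_sep x1 x2 x3 x4 - gf_red x1 x2 x3 x4) * Dgf z2 z3
      = fps_const (z1 * z2 * z3) * fps_X + (Agf z2 z3 + fps_X * fps_const (z2 * z3))
        * (Egf z1 z2 z3 - fps_const (z1 * z2 * z3) * fps_X)" .
  then have I: "I = gf_sep x1 x2 x3 x4 - gf_red x1 x2 x3 x4"
    unfolding I_def using D by (metis nonzero_mult_div_cancel_right)
  show "stat_gf (\<lambda>p. separable p \<and> \<not> reducible_perm p) x1 x2 x3 x4 = I"
    using stat_gf_not_reducible[of x1 x2 x3 x4] split by (simp add: I weight)
  show "stat_gf (\<lambda>p. separable p \<and> \<not> reducible_perm p) x3 x4 x1 x2 = Egf z1 z2 z3"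
    using stat_gf_not_reducible[of x3 x4 x1 x2] gf_skew_eq_gf_red_swap[of x3 x4 x1 x2] red weight
    by (simp add: mult_ac)
  have "gf_red x3 x4 x1 x2 = gf_sep x1 x2 x3 x4 - gf_red x1 x2 x3 x4 - fps_const (z1 * z2 * z3) * fps_X"
    using gf_skew_eq_gf_red_swap[of x1 x2 x3 x4] split by simp
  then show "gf_red x3 x4 x1 x2 = - fps_const (z1 * z2 * z3) * fps_X + I"
    by (simp add: I algebra_simps del: fps_const_neg)
qed

section \<open>Closed form of S\<close>

lemma Sgf_one_quadratic: "Sgf 1 ^ 2 + (fps_X - 1) * Sgf 1 + fps_X = 0"
proof -
  have "Sgf 1 * Sgf 1 ^ 2 + (fps_X * (1 + Sgf 1) - 1) * Sgf 1 + fps_X * (1 + Sgf 1) = 0"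
    using Sgf_quadratic[of 1] by simp
  then have "(1 + Sgf 1) * (Sgf 1 ^ 2 + (fps_X - 1) * Sgf 1 + fps_X) = 0"
    by algebra
  moreover have "1 + Sgf 1 \<noteq> 0"
    by (rule Sgf_plus_one_nonzero)
  ultimately show ?thesis
    by simp
qed

lemma fsqrt_eqI:
  assumes "b ^ 2 = a" "b $ 0 = 1"
  shows "fsqrt a = b"
proof -
  have "a $ 0 = 1"
    using assms(1)[symmetric] assms(2) by (simp add: power2_eq_square)
  then show ?thesis
    unfolding fsqrt_def using radical_unique[of "\<lambda>_ x. csqrt x" 1 a b] assms
    by (simp add: numeral_2_eq_2)
qed

lemma fsqrt_Sgf_one: "fsqrt (fps_X ^ 2 - 6 * fps_X + 1) = 1 - fps_X - 2 * Sgf 1"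
  by (rule fsqrt_eqI) (use Sgf_one_quadratic in \<open>algebra, simp\<close>)

lemma Sgf_reduced_quadratic:
  "(fps_X + Sgf 1) * Sgf z ^ 2 + (fps_X + Sgf 1 + 2 * fps_const z * fps_X - 2) * Sgf z
     + 2 * fps_const z * fps_X = 0"
proof -
  have "(1 + Sgf 1) * ((fps_X + Sgf 1) * Sgf z ^ 2 + (fps_X + Sgf 1 + 2 * fps_const z * fps_X - 2) * Sgf z
      + 2 * fps_const z * fps_X) = 0"
    using Sgf_quadratic[of z] Sgf_one_quadratic by algebra
  moreover have "1 + Sgf 1 \<noteq> 0"
    by (rule Sgf_plus_one_nonzero)
  ultimately show ?thesis
    by simp
qed

lemma Sgf_eq_Sclosed: "Sgf z = Sclosed z"
proof -
  define X c R Z where "X = (fps_X :: complex fps)" and "c = Sgf 1" and "R = Sgf z" and "Z = fps_const z"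
  define r where "r = fsqrt (X ^ 2 - 6 * X + 1)"
  have r: "r = 1 - X - 2 * c"
    unfolding r_def X_def c_def by (rule fsqrt_Sgf_one)
  define q4 h where "q4 = inverse (4 :: complex fps)" and "h = inverse (2 :: complex fps)"
  have q4: "4 * q4 = 1" and h: "2 * h = 1"
    unfolding q4_def h_def by (simp_all add: inverse_mult_eq_1')
  have div4: "y / 4 = y * q4" for y :: "complex fps"
    unfolding q4_def by (simp add: fps_divide_unit)
  define w where "w = (- r * q4 - X * Z + X * q4 + 5 * q4) ^ 2 + r - X - 1"
  \<comment> \<open>the square root given by the quadratic formula applied to \<open>Sgf_reduced_quadratic\<close>\<close>
  define s where "s = 1 - h * X - h * c - Z * X - (X + c) * R"
  have "fsqrt w = s"
  proof (rule fsqrt_eqI)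
    show "s ^ 2 = w"
      unfolding s_def w_def r using Sgf_reduced_quadratic[of z] q4 h
      unfolding X_def c_def R_def Z_def by algebra
    show "s $ 0 = 1"
      by (simp add: s_def X_def c_def R_def)
  qed
  then have num: "4 * fsqrt w - r + 4 * X * Z + X - 3 = R * (2 * (r - X - 1))"
    unfolding s_def r using h by algebra
  have "2 * (r - X - 1) \<noteq> 0"
  proof
    assume "2 * (r - X - 1) = 0"
    then have "2 * X = 0"
      using Sgf_one_quadratic unfolding r X_def c_def by algebra
    then have "(2 * X) $ 1 = 0"
      by simp
    then show False
      by (simp add: X_def)
  qed
  moreover have "Sclosed z = (4 * fsqrt w - r + 4 * X * Z + X - 3) / (2 * (r - X - 1))"
    unfolding Sclosed_def Let_def div4 w_def r_def X_def Z_def ..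
  ultimately show ?thesis
    unfolding num R_def by simp
qed

theorem theorem8:
  fixes z z1 z2 z3 :: complex
  shows "Sgf z = Sclosed z
    \<and> (\<forall>T \<in> {(lmax, rmax, lmin), (lmin, rmin, lmax), (rmin, rmax, lmin), (rmax, rmin, lmax)}.
           GF separable T z1 z2 z3 = Egf z1 z2 z3 / Dgf z2 z3)
    \<and> (\<forall>T \<in> {(lmax, rmax, lmin), (rmin, rmax, lmin)}.
           GF (\<lambda>p. separable p \<and> reducible_perm p) T z1 z2 z3
             = Egf z1 z2 z3 - fps_const (z1 * z2 * z3) * fps_X
         \<and> GF (\<lambda>p. separable p \<and> irreducible_perm p) T z1 z2 z3
             = (fps_const (z1 * z2 * z3) * fps_X
                + (Agf z2 z3 + fps_X * fps_const (z2 * z3))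
                  * (Egf z1 z2 z3 - fps_const (z1 * z2 * z3) * fps_X)) / Dgf z2 z3)
    \<and> (\<forall>T \<in> {(lmin, rmin, lmax), (rmax, rmin, lmax)}.
           GF (\<lambda>p. separable p \<and> irreducible_perm p) T z1 z2 z3 = Egf z1 z2 z3
         \<and> GF (\<lambda>p. separable p \<and> reducible_perm p) T z1 z2 z3
             = - fps_const (z1 * z2 * z3) * fps_X
               + (fps_const (z1 * z2 * z3) * fps_X
                  + (Agf z2 z3 + fps_X * fps_const (z2 * z3))
                    * (Egf z1 z2 z3 - fps_const (z1 * z2 * z3) * fps_X)) / Dgf z2 z3)"
proof -
  have GF: "GF P (lmax, rmax, lmin) z1 z2 z3 = stat_gf P z1 z2 z3 1"
    "GF P (lmin, rmin, lmax) z1 z2 z3 = stat_gf P z3 1 z1 z2"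
    "GF P (rmin, rmax, lmin) z1 z2 z3 = stat_gf P 1 z2 z3 z1"
    "GF P (rmax, rmin, lmax) z1 z2 z3 = stat_gf P z3 z1 1 z2" for P
    by (simp_all add: GF_def stat_gf_def stat_weight_def mult_ac)
  have irreducible: "(\<lambda>p. separable p \<and> irreducible_perm p) = (\<lambda>p. separable p \<and> \<not> reducible_perm p)"
    using irreducible_perm_iff by blast
  have "1 * z2 * z3 * z1 = z1 * z2 * z3"
    by simp
  note lmax_rmax_lmin = separable_gf_closed_forms[OF gf_sep_lmax_rmax_lmin gf_red_lmax_rmax_lmin mult_1_right]
    and rmin_rmax_lmin = separable_gf_closed_forms[OF gf_sep_rmin_rmax_lmin gf_red_rmin_rmax_lmin this]
  show ?thesis
    unfolding irreducible
    using Sgf_eq_Sclosed lmax_rmax_lmin rmin_rmax_lmin gf_red_lmax_rmax_lmin gf_red_rmin_rmax_lmin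
    by (simp add: GF)
qed

end
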